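(* Let $q,d\geq 2$ be coprime integers. Suppose that for every $\mathbf{s}\in\mathbb{Z}^5$ the density $\delta(q,d;\mathbf{s})$ exists. Then for every $\theta_w,x\in\mathbb{Z}/d\mathbb{Z}$ and every unit $\theta_u$ of $\mathbb{Z}/d\mathbb{Z}$, $$\delta(q,d;\theta_u,\theta_w,0,0,x)=\frac{1}{d}.$$ In particular, the map $n\mapsto u_q(n)$ is uniformly distributed modulo $d$ (every residue class modulo $d$ is attained by $u_q(n)$ on a set of $n$ of natural density $1/d$).
   Context: For an integer $q\geq 2$ and $n\in\mathbb{N}$: $v_q(0)=0$ and, for $n>0$, $v_q(n)=\max\{k: q^k\mid n\}$; $w_q(n)=\sum_{i=0}^n v_q(i)$; $u_q(n)=\sum_{i=0}^n w_q(i)$. For $\mathbf{s}=(\theta_u,\theta_w,\theta_2,\theta_1,\theta_0)$ with entries in $\mathbb{Z}$ or $\mathbb{Z}/d\mathbb{Z}$, $\gamma(A,q,d;\mathbf{s})$ is the number of $n\in\mathbb{N}$, $n<A$, with $\theta_u u_q(n)+\theta_w w_q(n)+\theta_2\frac{n(n+1)}{2}+\theta_1 n+\theta_0\equiv 0\pmod d$, and $\delta(q,d;\mathbf{s})=\lim_{N\to\infty}\gamma(N,q,d;\mathbf{s})/N$ (when the limit exists). *)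

theory Defs
  imports Complex_Main
begin

definition vq :: "nat \<Rightarrow> nat \<Rightarrow> nat" where
  "vq q n = (if n = 0 then 0 else (GREATEST k. q ^ k dvd n))"

definition wq :: "nat \<Rightarrow> nat \<Rightarrow> nat" where
  "wq q n = (\<Sum>i\<le>n. vq q i)"

definition uq :: "nat \<Rightarrow> nat \<Rightarrow> nat" where
  "uq q n = (\<Sum>i\<le>n. wq q i)"

text \<open>Parameter vector s = (theta_u, theta_w, theta_2, theta_1, theta_0); entries are integers,
  residues mod d are represented by integer representatives.\<close>
type_synonym param = "int \<times> int \<times> int \<times> int \<times> int"

definition gamma_count :: "nat \<Rightarrow> nat \<Rightarrow> nat \<Rightarrow> param \<Rightarrow> nat" where
  "gamma_count A q d s = (case s of (tu, tw, t2, t1, t0) \<Rightarrow>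
     card {n. n < A \<and>
       (tu * int (uq q n) + tw * int (wq q n) + t2 * int (n * (n + 1) div 2)
        + t1 * int n + t0) mod int d = 0})"

definition gamma_ratio :: "nat \<Rightarrow> nat \<Rightarrow> param \<Rightarrow> nat \<Rightarrow> real" where
  "gamma_ratio q d s N = real (gamma_count N q d s) / real N"

end

(* The phase a u_q(n) + b w_q(n) + c n is almost self-similar: if q^L = 1 (mod d) and d divides
   w_q(q^L), then modulo d the phase of q^L m + r is the phase of r plus the phase of m with
   parameters (a, b + r a, a u_q(q^L - 1) + c).  Consequently the mean value E(a, b, c) of
   exp(2 pi i phase(n) / d) is the average over r < q^L of exp(2 pi i phase(r) / d) E(a, b + r a, c').
   Take (a, b, c) with d not dividing a for which |E| is maximal.  If this maximum were positive,
   equality in the triangle inequality would force phase(r + d) = phase(r) modulo d for every r;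
   but the third difference of the phase at q d and q^2 d equals a and 2 a, so d would divide a.
   Hence E(a, b, c) = 0 whenever d does not divide a, and orthogonality of the characters modulo d
   gives density 1/d as soon as theta_u is a unit. *)

theory Submission
  imports Defs "HOL-Number_Theory.Number_Theory" "HOL-Library.Real_Mod"
begin

section \<open>Additive characters modulo d\<close>

definition add_char :: "nat \<Rightarrow> int \<Rightarrow> complex" where
  "add_char d x = cis (2 * pi * of_int x / of_nat d)"

lemma add_char_add: "add_char d (x + y) = add_char d x * add_char d y"
  by (simp add: add_char_def cis_mult add_divide_distrib distrib_left)

lemma add_char_0 [simp]: "add_char d 0 = 1"
  by (simp add: add_char_def)

lemma norm_add_char [simp]: "norm (add_char d x) = 1"
  by (simp add: add_char_def)

lemma add_char_eq_1_iff:
  assumes "d > 0"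
  shows "add_char d x = 1 \<longleftrightarrow> int d dvd x"
proof -
  have "add_char d x = 1 \<longleftrightarrow> (\<exists>n::int. (of_int x :: real) = of_int (n * int d))"
    using assms by (simp add: add_char_def cis_eq_1_iff field_simps)
  also have "\<dots> \<longleftrightarrow> int d dvd x"
    by (simp only: of_int_eq_iff) (auto simp: mult.commute)
  finally show ?thesis .
qed

lemma add_char_eq_iff:
  assumes "d > 0"
  shows "add_char d x = add_char d y \<longleftrightarrow> [x = y] (mod int d)"
proof -
  have "add_char d x = add_char d (x - y) * add_char d y"
    by (simp flip: add_char_add)
  then have "add_char d x = add_char d y \<longleftrightarrow> add_char d (x - y) = 1"
    using norm_add_char[of d y] by (auto simp del: norm_add_char)
  then show ?thesis
    using assms by (simp add: add_char_eq_1_iff cong_iff_dvd_diff)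
qed

lemma add_char_of_nat_mult: "add_char d (int k * y) = add_char d y ^ k"
proof (induction k)
  case (Suc k)
  have "int (Suc k) * y = y + int k * y" by (simp add: algebra_simps)
  then show ?case by (simp add: add_char_add Suc.IH)
qed simp

lemma sum_add_char:
  assumes "d > 0"
  shows "(\<Sum>k<d. add_char d (int k * y)) = (if int d dvd y then of_nat d else 0)"
proof -
  have "add_char d y ^ d = 1"
    using assms by (simp flip: add_char_of_nat_mult add: add_char_eq_1_iff)
  moreover have "add_char d y = 1 \<longleftrightarrow> int d dvd y"
    using assms by (rule add_char_eq_1_iff)
  ultimately show ?thesis
    by (simp add: add_char_of_nat_mult sum_gp_strict)
qed

lemma unit_eq_if_norm_add_ge_2:
  fixes u v :: complex
  assumes "norm u = 1" "norm v = 1" "2 \<le> norm (u + v)"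
  shows "u = v"
proof -
  have "norm (u + v)^2 + norm (u - v)^2 = 2 * norm u ^ 2 + 2 * norm v ^ 2"
    by (simp only: cmod_power2) (simp add: power2_eq_square algebra_simps)
  then have "norm (u + v)^2 + norm (u - v)^2 = 4"
    by (simp add: assms(1,2))
  moreover have "4 \<le> norm (u + v)^2"
    using assms(3) by (metis power_mono zero_le_numeral power2_eq_square numeral_times_numeral num_double)
  ultimately have "norm (u - v)^2 \<le> 0"
    by linarith
  then show ?thesis by simp
qed

lemma norm_pair_ge_if_norm_sum_maximal:
  fixes z :: "'a \<Rightarrow> 'b::real_normed_vector"
  assumes "finite A" "i \<in> A" "j \<in> A" "i \<noteq> j"
    and bound: "\<And>k. k \<in> A \<Longrightarrow> norm (z k) \<le> M"
    and maximal: "real (card A) * M \<le> norm (\<Sum>k\<in>A. z k)"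
  shows "2 * M \<le> norm (z i + z j)"
proof -
  define B where "B = A - {i} - {j}"
  have j: "j \<in> A - {i}" using assms(3,4) by simp
  have "(\<Sum>k\<in>A. z k) = z i + z j + (\<Sum>k\<in>B. z k)"
    unfolding B_def using sum.remove[OF assms(1,2), of z] sum.remove[OF _ j, of z] assms(1)
    by (simp add: add.assoc)
  then have "norm (\<Sum>k\<in>A. z k) \<le> norm (z i + z j) + norm (\<Sum>k\<in>B. z k)"
    by (simp add: norm_triangle_ineq)
  also have "norm (\<Sum>k\<in>B. z k) \<le> (\<Sum>k\<in>B. M)"
    using bound by (intro order_trans[OF norm_sum sum_mono]) (simp add: B_def)
  also have "\<dots> = (real (card A) - 2) * M"
  proof -
    have card: "Suc (Suc (card B)) = card A"
      using card_Suc_Diff1[OF assms(1,2)] card_Suc_Diff1[of "A - {i}" j] j assms(1) by (simp add: B_def)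
    show ?thesis by (simp flip: card)
  qed
  finally show ?thesis using maximal by (simp add: algebra_simps)
qed

section \<open>Valuations and the block structure of w_q and u_q\<close>

lemma vq_eq_multiplicity:
  assumes "q \<noteq> 1"
  shows "vq q n = multiplicity q n"
proof (cases "n = 0")
  case False
  have "\<not> is_unit q" using assms by simp
  then have "(GREATEST k. q ^ k dvd n) = multiplicity q n"
    using False by (intro Greatest_equality) (auto simp: multiplicity_dvd power_dvd_iff_le_multiplicity)
  then show ?thesis using False by (simp add: vq_def)
qed (simp add: vq_def)

lemma wq_0 [simp]: "wq q 0 = 0"
  by (simp add: wq_def vq_def)

lemma wq_Suc: "wq q (Suc n) = wq q n + vq q (Suc n)"
  by (simp add: wq_def)

lemma uq_Suc: "uq q (Suc n) = uq q n + wq q (Suc n)"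
  by (simp add: uq_def)

locale radix =
  fixes q :: nat
  assumes radix_ge_2: "q \<ge> 2"
begin

lemma vq_eq_multiplicity_radix [simp]: "vq q n = multiplicity q n"
  using radix_ge_2 by (simp add: vq_eq_multiplicity)

lemma multiplicity_pow_mult:
  assumes "m > 0"
  shows "multiplicity q (q ^ L * m) = L + multiplicity q m"
proof -
  obtain m' where m': "m = q ^ multiplicity q m * m'" "\<not> q dvd m'"
    using assms radix_ge_2 multiplicity_decompose'[of m q] by auto
  have "q ^ L * m = q ^ (L + multiplicity q m) * m'"
    by (subst m'(1)) (simp add: power_add)
  then show ?thesis using m'(2) radix_ge_2 by (simp add: multiplicity_decomposeI)
qed

lemma multiplicity_block_offset:
  assumes "0 < i" "i < q ^ L"
  shows "multiplicity q (q ^ L * m + i) = multiplicity q i"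
proof (cases "m = 0")
  case False
  have "q ^ multiplicity q i \<le> i"
    using assms(1) by (simp add: dvd_imp_le multiplicity_dvd)
  then have "multiplicity q i < L"
    using assms(2) radix_ge_2 by (metis le_less_trans nat_power_less_imp_less zero_less_numeral order_less_le_trans)
  also have "L \<le> multiplicity q (q ^ L * m)"
    using False by (simp add: multiplicity_pow_mult)
  finally show ?thesis
    using False assms(1) radix_ge_2 by (simp add: multiplicity_sum_lt add.commute)
qed simp

lemma wq_block_offset:
  assumes "r < q ^ L"
  shows "wq q (q ^ L * m + r) = wq q (q ^ L * m) + wq q r"
  using assms
proof (induction r)
  case (Suc r)
  have "multiplicity q (q ^ L * m + Suc r) = multiplicity q (Suc r)"
    using Suc.prems by (intro multiplicity_block_offset) auto
  with Suc show ?case by (simp add: wq_Suc)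
qed simp

lemma wq_mult_pow: "wq q (q ^ L * m) = m * wq q (q ^ L) + wq q m"
proof (induction m)
  case (Suc m)
  let ?Q = "q ^ L"
  have Q_pos: "?Q > 0" using radix_ge_2 by simp
  then have split: "?Q * Suc m = Suc (?Q * m + (?Q - 1))" "?Q = Suc (?Q - 1)"
    by (simp_all add: algebra_simps)
  have "wq q (?Q * Suc m) = wq q (?Q * m + (?Q - 1)) + multiplicity q (?Q * Suc m)"
    by (metis split(1) wq_Suc vq_eq_multiplicity_radix)
  also have "\<dots> = wq q (?Q * m) + (wq q (?Q - 1) + L) + multiplicity q (Suc m)"
    using Q_pos by (simp add: wq_block_offset multiplicity_pow_mult del: mult_Suc_right)
  also have "wq q (?Q - 1) + L = wq q ?Q"
    using radix_ge_2 wq_Suc[of q "?Q - 1"] by (simp add: multiplicity_same_power' flip: split(2))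
  finally show ?case using Suc.IH by (simp add: wq_Suc)
qed simp

lemma wq_block:
  assumes "r < q ^ L"
  shows "wq q (q ^ L * m + r) = m * wq q (q ^ L) + wq q m + wq q r"
  using assms by (simp add: wq_block_offset wq_mult_pow)

text \<open>\<open>uq_below n\<close> is \<open>u\<^sub>q(n - 1)\<close>, with the convention \<open>u\<^sub>q(-1) = 0\<close>.\<close>

definition uq_below :: "nat \<Rightarrow> nat" where
  "uq_below n = (\<Sum>i<n. wq q i)"

lemma uq_below_Suc: "uq_below (Suc n) = uq_below n + wq q n"
  by (simp add: uq_below_def)

lemma uq_below_0 [simp]: "uq_below 0 = 0"
  by (simp add: uq_below_def)

lemma uq_eq_uq_below: "uq q n = uq_below (Suc n)"
  by (simp add: uq_below_def uq_def lessThan_Suc_atMost)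

lemma uq_below_block_offset:
  assumes "r \<le> q ^ L"
  shows "uq_below (q ^ L * m + r) = uq_below (q ^ L * m) + r * (m * wq q (q ^ L) + wq q m) + uq_below r"
  using assms
proof (induction r)
  case (Suc r)
  then have "wq q (q ^ L * m + r) = m * wq q (q ^ L) + wq q m + wq q r"
    by (intro wq_block) simp
  with Suc show ?case by (simp add: uq_below_Suc algebra_simps)
qed simp

lemma uq_below_mult_pow:
  "uq_below (q ^ L * m) = q ^ L * wq q (q ^ L) * (\<Sum>i<m. i) + q ^ L * uq_below m + m * uq_below (q ^ L)"
proof (induction m)
  case (Suc m)
  have "uq_below (q ^ L * Suc m) = uq_below (q ^ L * m) + q ^ L * (m * wq q (q ^ L) + wq q m) + uq_below (q ^ L)"
    using uq_below_block_offset[of "q ^ L" L m] by (simp add: algebra_simps)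
  then show ?case using Suc.IH by (simp add: uq_below_Suc algebra_simps)
qed simp

lemma uq_block:
  assumes "r < q ^ L"
  shows "uq q (q ^ L * m + r) = q ^ L * wq q (q ^ L) * (\<Sum>i<m. i) + q ^ L * uq_below m
    + m * uq_below (q ^ L) + (r + 1) * (m * wq q (q ^ L) + wq q m) + uq q r"
  using assms uq_below_block_offset[of "Suc r" L m]
  by (simp add: uq_eq_uq_below uq_below_mult_pow)

definition phase :: "int \<Rightarrow> int \<Rightarrow> int \<Rightarrow> nat \<Rightarrow> int" where
  "phase a b c n = a * int (uq q n) + b * int (wq q n) + c * int n"

lemma phase_cong:
  assumes "[a = a'] (mod k)" "[b = b'] (mod k)" "[c = c'] (mod k)"
  shows "[phase a b c n = phase a' b' c' n] (mod k)"
  unfolding phase_def by (intro cong_add cong_mult cong_refl assms)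

lemma phase_block_cong:
  assumes "k dvd int (wq q (q ^ L))" "[int (q ^ L) = 1] (mod k)" "r < q ^ L"
  shows "[phase a b c (q ^ L * m + r)
    = phase a (b + int r * a) (a * int (uq_below (q ^ L)) + c) m + phase a b c r] (mod k)"
proof -
  define Q W S where "Q = int (q ^ L)" and "W = int (wq q (q ^ L))" and "S = int (\<Sum>i<m. i)"
  define F where "F Q' W' = a * (Q' * W' * S + Q' * int (uq_below m) + int m * int (uq_below (q ^ L))
      + (int r + 1) * (int m * W' + int (wq q m)) + int (uq q r))
    + b * (int m * W' + int (wq q m) + int (wq q r)) + c * (Q' * int m + int r)" for Q' W'
  have "[Q = 1] (mod k)" and "[W = 0] (mod k)"
    using assms(1,2) by (simp_all add: Q_def W_def cong_0_iff)
  then have "[F Q W = F 1 0] (mod k)"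
    unfolding F_def by (intro cong_add cong_mult cong_refl)
  moreover have "phase a b c (q ^ L * m + r) = F Q W"
    using uq_block[OF assms(3), of m] wq_block[OF assms(3), of m]
    by (simp add: phase_def F_def Q_def W_def S_def algebra_simps)
  moreover have "F 1 0 = phase a (b + int r * a) (a * int (uq_below (q ^ L)) + c) m + phase a b c r"
    by (simp add: F_def phase_def uq_eq_uq_below uq_below_Suc algebra_simps)
  ultimately show ?thesis by simp
qed

lemma phase_third_difference:
  "phase a b c (n + 3) - phase a b c (n + 2) - phase a b c (n + 1) + phase a b c n
    = a * (int (multiplicity q (n + 2)) + int (multiplicity q (n + 3)))
      + b * (int (multiplicity q (n + 3)) - int (multiplicity q (n + 1)))"
proof -
  have "n + 3 = Suc (Suc (Suc n))" "n + 2 = Suc (Suc n)" "n + 1 = Suc n" by simp_all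
  then show ?thesis by (simp only:) (simp add: phase_def uq_Suc wq_Suc algebra_simps)
qed

lemma multiplicity_pow_mult_coprime:
  assumes "\<not> q dvd p"
  shows "multiplicity q (q ^ j * p) = j"
  using assms radix_ge_2 by (intro multiplicity_decomposeI) auto

lemma multiplicity_pow_mult_plus_minus_1:
  assumes "j \<ge> 1" "p > 0"
  shows "multiplicity q (q ^ j * p + 1) = 0" "multiplicity q (q ^ j * p - 1) = 0"
proof -
  have q_dvd: "q dvd q ^ j * p" using assms(1) by (simp add: dvd_power)
  have pos: "q ^ j * p \<ge> 1" using assms(2) radix_ge_2 by simp
  have "\<not> q dvd q ^ j * p + 1"
  proof
    assume "q dvd q ^ j * p + 1"
    then have "q dvd 1" using q_dvd by (metis dvd_add_right_iff)
    then show False using radix_ge_2 by simp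
  qed
  then show "multiplicity q (q ^ j * p + 1) = 0" by (rule not_dvd_imp_multiplicity_0)
  have "\<not> q dvd q ^ j * p - 1"
  proof
    assume "q dvd q ^ j * p - 1"
    with q_dvd have "q dvd q ^ j * p - (q ^ j * p - 1)" by (rule dvd_diff_nat)
    then show False using pos radix_ge_2 by simp
  qed
  then show "multiplicity q (q ^ j * p - 1) = 0" by (rule not_dvd_imp_multiplicity_0)
qed

lemma phase_third_difference_at_pow_mult:
  assumes "\<not> q dvd p" "j \<ge> 1"
  shows "phase a b c (q ^ j * p + 1) - phase a b c (q ^ j * p) - phase a b c (q ^ j * p - 1)
    + phase a b c (q ^ j * p - 2) = a * int j"
proof -
  have p_pos: "p > 0" using assms(1) by (auto intro: gr0I)
  define n where "n = q ^ j * p - 2"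
  have "2 \<le> q" by (rule radix_ge_2)
  also have "\<dots> \<le> q ^ j" using assms(2) radix_ge_2 by (intro self_le_power) auto
  also have "\<dots> \<le> q ^ j * p" using p_pos by simp
  finally have n: "q ^ j * p = n + 2" by (simp add: n_def)
  have "multiplicity q (n + 2) = j" "multiplicity q (n + 3) = 0" "multiplicity q (n + 1) = 0"
    using multiplicity_pow_mult_coprime[OF assms(1), of j] multiplicity_pow_mult_plus_minus_1[OF assms(2) p_pos]
    by (simp_all add: n numeral_3_eq_3)
  then have "phase a b c (n + 3) - phase a b c (n + 2) - phase a b c (n + 1) + phase a b c n = a * int j"
    unfolding phase_third_difference by simp
  then show ?thesis by (simp add: n numeral_3_eq_3)
qed

lemma periodic_phase_imp_cong_0:
  assumes "\<not> q dvd p" and periodic: "\<forall>r. [phase a b c (r + p) = phase a b c r] (mod k)"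
  shows "[a = 0] (mod k)"
proof -
  have p_pos: "p > 0" using assms(1) by (auto intro: gr0I)
  have shift: "[phase a b c (r + j * p) = phase a b c r] (mod k)" for r j
  proof (induction j)
    case (Suc j)
    have "r + Suc j * p = (r + j * p) + p" by simp
    then show ?case using periodic Suc.IH by (metis cong_trans)
  qed simp
  define D where "D x = phase a b c (x + 1) - phase a b c x - phase a b c (x - 1) + phase a b c (x - 2)" for x
  have D_shift: "[D (x + j * p) = D x] (mod k)" if "x \<ge> 2" for x j
  proof -
    have "x + j * p + 1 = (x + 1) + j * p" "x + j * p - 1 = (x - 1) + j * p" "x + j * p - 2 = (x - 2) + j * p"
      using that by simp_all
    then show ?thesis unfolding D_def by (simp only:) (intro cong_add cong_diff shift)
  qed
  have D_at: "D (q ^ j * p) = a * int j" if "j \<ge> 1" for j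
    unfolding D_def using phase_third_difference_at_pow_mult[OF assms(1) that] .
  have "q ^ 2 * p = q * p + ((q - 1) * q) * p"
    using radix_ge_2 by (simp add: power2_eq_square algebra_simps flip: mult_Suc)
  moreover have "q * p \<ge> 2" using radix_ge_2 p_pos by (simp add: le_trans[OF _ mult_le_mono2[of 1 p q]])
  ultimately have "[D (q ^ 2 * p) = D (q ^ 1 * p)] (mod k)" using D_shift by simp
  then have "[a * 2 = a * 1] (mod k)" using D_at[of 1] D_at[of 2] by simp
  then show ?thesis by (metis cong_add_lcancel add_0_right mult_1_right mult_2_right)
qed

end

section \<open>Exponential sums\<close>

locale radix_coprime = radix +
  fixes d :: nat
  assumes modulus_ge_2: "d \<ge> 2" and coprime_radix_modulus: "coprime q d"
begin

lemma modulus_pos: "d > 0"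
  using modulus_ge_2 by simp

lemma exists_good_block_length:
  obtains L where "t < q ^ L" "int d dvd int (wq q (q ^ L))" "[int (q ^ L) = 1] (mod int d)"
proof -
  define T where "T = totient d"
  have Q0: "[q ^ T = 1] (mod d)"
    unfolding T_def using coprime_radix_modulus by (rule euler_theorem)
  have wq_pow_cong: "[wq q ((q ^ T) ^ j) = j * wq q (q ^ T)] (mod d)" for j
  proof (induction j)
    case (Suc j)
    have "wq q ((q ^ T) ^ Suc j) = (q ^ T) ^ j * wq q (q ^ T) + wq q ((q ^ T) ^ j)"
      using wq_mult_pow[of T "(q ^ T) ^ j"] by simp
    also have "[\<dots> = 1 * wq q (q ^ T) + j * wq q (q ^ T)] (mod d)"
      using cong_pow[OF Q0, of j] by (intro cong_add cong_mult Suc.IH cong_refl) simp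
    finally show ?case by simp
  qed (simp add: wq_Suc)
  define L where "L = T * (d * t)"
  have QL: "q ^ L = (q ^ T) ^ (d * t)"
    by (simp add: L_def power_mult)
  have "d dvd wq q (q ^ L)"
    unfolding QL using cong_dvd_iff[OF wq_pow_cong[of "d * t"]] by (simp add: mult.assoc)
  moreover have "[q ^ L = 1] (mod d)"
    unfolding QL using cong_pow[OF Q0, of "d * t"] by simp
  moreover have "t < q ^ L"
  proof -
    have "T \<ge> 1" "d \<ge> 1" using modulus_ge_2 by (simp_all add: T_def Suc_le_eq)
    then have "t \<le> L" by (simp add: L_def mult_le_mono1)
    have "t < 2 ^ t" by (rule less_exp)
    also have "\<dots> \<le> q ^ t" using radix_ge_2 by (simp add: power_mono)
    also have "\<dots> \<le> q ^ L" using radix_ge_2 \<open>t \<le> L\<close> by (simp add: power_increasing)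
    finally show ?thesis .
  qed
  ultimately show ?thesis
    using that by (metis cong_int_iff of_nat_1 int_dvd_int_iff)
qed

definition expsum :: "int \<Rightarrow> int \<Rightarrow> int \<Rightarrow> nat \<Rightarrow> complex" where
  "expsum a b c N = (\<Sum>n<N. add_char d (phase a b c n))"

lemma expsum_cong:
  assumes "[a = a'] (mod int d)" "[b = b'] (mod int d)" "[c = c'] (mod int d)"
  shows "expsum a b c = expsum a' b' c'"
proof -
  have "add_char d (phase a b c n) = add_char d (phase a' b' c' n)" for n
    using phase_cong[OF assms] add_char_eq_iff[OF modulus_pos] by blast
  then show ?thesis by (simp add: expsum_def fun_eq_iff)
qed

lemma expsum_block:
  assumes "int d dvd int (wq q (q ^ L))" "[int (q ^ L) = 1] (mod int d)"
  shows "expsum a b c (q ^ L * N)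
    = (\<Sum>r<q ^ L. add_char d (phase a b c r) * expsum a (b + int r * a) (a * int (uq_below (q ^ L)) + c) N)"
proof -
  let ?Q = "q ^ L" and ?b = "\<lambda>r. b + int r * a" and ?c = "a * int (uq_below (q ^ L)) + c"
  have "expsum a b c (?Q * N) = (\<Sum>m<N. \<Sum>r<?Q. add_char d (phase a b c (?Q * m + r)))"
  proof -
    have "expsum a b c (?Q * N) = (\<Sum>m<N. \<Sum>n\<in>{m * ?Q..<m * ?Q + ?Q}. add_char d (phase a b c n))"
      unfolding expsum_def by (simp add: sum.nat_group mult.commute)
    also have "\<dots> = (\<Sum>m<N. \<Sum>r<?Q. add_char d (phase a b c (?Q * m + r)))"
      by (subst sum.atLeastLessThan_shift_0) (simp add: atLeast0LessThan mult.commute)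
    finally show ?thesis .
  qed
  also have "\<dots> = (\<Sum>m<N. \<Sum>r<?Q. add_char d (phase a b c r) * add_char d (phase a (?b r) ?c m))"
  proof (intro sum.cong refl)
    fix m r assume "r \<in> {..<?Q}"
    then have "[phase a b c (?Q * m + r) = phase a (?b r) ?c m + phase a b c r] (mod int d)"
      using assms by (intro phase_block_cong) auto
    then show "add_char d (phase a b c (?Q * m + r)) = add_char d (phase a b c r) * add_char d (phase a (?b r) ?c m)"
      using add_char_eq_iff[OF modulus_pos] by (metis add.commute add_char_add)
  qed
  also have "\<dots> = (\<Sum>r<?Q. add_char d (phase a b c r) * expsum a (?b r) ?c N)"
    by (subst sum.swap) (simp add: expsum_def sum_distrib_left)
  finally show ?thesis .
qed

lemma add_char_mod: "add_char d (x mod int d) = add_char d x"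
  by (simp add: add_char_eq_iff[OF modulus_pos])

lemma radix_not_dvd_modulus: "\<not> q dvd d"
proof
  assume "q dvd d"
  then have "q = 1" by (rule coprime_common_divisor_nat[OF coprime_radix_modulus dvd_refl])
  then show False using radix_ge_2 by simp
qed

lemma expsum_eq_sum_gamma_count:
  "expsum a b c N = (\<Sum>y\<in>{0..<int d}. add_char d y * of_nat (gamma_count N q d (a, b, 0, c, - y)))"
proof -
  have count: "gamma_count N q d (a, b, 0, c, - y) = card {n \<in> {..<N}. phase a b c n mod int d = y}"
    if "y \<in> {0..<int d}" for y
  proof -
    have "y mod int d = y" using that by simp
    then have "(X + - y) mod int d = 0 \<longleftrightarrow> X mod int d = y" for X
      using mod_eq_dvd_iff[of X "int d" y] by (simp add: mod_eq_0_iff_dvd)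
    then show ?thesis by (simp add: gamma_count_def phase_def)
  qed
  have "expsum a b c N = (\<Sum>n<N. add_char d (phase a b c n mod int d))"
    by (simp add: expsum_def add_char_mod)
  also have "\<dots> = (\<Sum>y\<in>{0..<int d}. \<Sum>n\<in>{n \<in> {..<N}. phase a b c n mod int d = y}.
      add_char d (phase a b c n mod int d))"
    using modulus_pos by (intro sum.group[symmetric]) auto
  also have "\<dots> = (\<Sum>y\<in>{0..<int d}. add_char d y * of_nat (gamma_count N q d (a, b, 0, c, - y)))"
    by (intro sum.cong refl) (simp add: count)
  finally show ?thesis .
qed

lemma gamma_ratio_eq_expsum_average:
  "of_real (gamma_ratio q d (tu, tw, 0, 0, x) N)
    = (\<Sum>k<d. add_char d (int k * x) * (expsum (int k * tu) (int k * tw) 0 N / of_nat N)) / of_nat d"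
proof -
  define F where "F n = tu * int (uq q n) + tw * int (wq q n) + x" for n
  have "gamma_count N q d (tu, tw, 0, 0, x) = card {n \<in> {..<N}. int d dvd F n}"
    by (simp add: gamma_count_def F_def dvd_eq_mod_eq_0)
  then have "(of_nat (gamma_count N q d (tu, tw, 0, 0, x)) :: complex)
      = (\<Sum>n<N. if int d dvd F n then 1 else 0)"
    by (simp add: sum.inter_filter[symmetric])
  also have "\<dots> = (\<Sum>n<N. (\<Sum>k<d. add_char d (int k * F n)) / of_nat d)"
    using modulus_pos by (intro sum.cong refl) (simp add: sum_add_char)
  also have "\<dots> = (\<Sum>k<d. add_char d (int k * x) * expsum (int k * tu) (int k * tw) 0 N) / of_nat d"
  proof -
    have "add_char d (int k * F n) = add_char d (int k * x) * add_char d (phase (int k * tu) (int k * tw) 0 n)" for k n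
      by (simp add: F_def phase_def algebra_simps flip: add_char_add)
    then show ?thesis
      by (simp add: expsum_def sum_distrib_left sum_divide_distrib[symmetric] sum.swap[of _ "{..<N}"])
  qed
  finally show ?thesis
    by (simp add: gamma_ratio_def sum_divide_distrib[symmetric] sum_distrib_left divide_divide_eq_left mult.commute)
qed

end

section \<open>Mean values of the exponential sums\<close>

locale convergent_densities = radix_coprime +
  assumes convergent_gamma_ratio: "\<And>s. convergent (gamma_ratio q d s)"
begin

definition char_mean :: "int \<Rightarrow> int \<Rightarrow> int \<Rightarrow> complex" where
  "char_mean a b c = lim (\<lambda>N. expsum a b c N / of_nat N)"

lemma expsum_average_tendsto: "(\<lambda>N. expsum a b c N / of_nat N) \<longlonglongrightarrow> char_mean a b c"
proof -
  have "(\<lambda>N. expsum a b c N / of_nat N)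
      = (\<lambda>N. \<Sum>y\<in>{0..<int d}. add_char d y * of_real (gamma_ratio q d (a, b, 0, c, - y) N))"
    by (simp add: fun_eq_iff expsum_eq_sum_gamma_count gamma_ratio_def sum_divide_distrib)
  moreover have "(\<lambda>N. \<Sum>y\<in>{0..<int d}. add_char d y * of_real (gamma_ratio q d (a, b, 0, c, - y) N))
      \<longlonglongrightarrow> (\<Sum>y\<in>{0..<int d}. add_char d y * of_real (lim (gamma_ratio q d (a, b, 0, c, - y))))"
    using convergent_gamma_ratio by (intro tendsto_intros) (simp add: convergent_LIMSEQ_iff)
  ultimately have "convergent (\<lambda>N. expsum a b c N / of_nat N)"
    by (auto simp: convergent_def)
  then show ?thesis by (simp add: char_mean_def convergent_LIMSEQ_iff)
qed

lemma char_mean_cong: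
  assumes "[a = a'] (mod int d)" "[b = b'] (mod int d)" "[c = c'] (mod int d)"
  shows "char_mean a b c = char_mean a' b' c'"
  by (simp add: char_mean_def expsum_cong[OF assms])

lemma char_mean_0: "char_mean 0 0 0 = 1"
proof -
  have "\<forall>\<^sub>F N in sequentially. 1 = expsum 0 0 0 N / of_nat N"
    using eventually_gt_at_top[of 0] by eventually_elim (simp add: expsum_def phase_def)
  then have "(\<lambda>N. expsum 0 0 0 N / of_nat N) \<longlonglongrightarrow> 1"
    by (rule Lim_transform_eventually[OF tendsto_const])
  then show ?thesis using expsum_average_tendsto LIMSEQ_unique by blast
qed

lemma char_mean_block:
  assumes "int d dvd int (wq q (q ^ L))" "[int (q ^ L) = 1] (mod int d)"
  shows "char_mean a b c = (\<Sum>r<q ^ L. add_char d (phase a b c r)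
    * char_mean a (b + int r * a) (a * int (uq_below (q ^ L)) + c)) / of_nat (q ^ L)"
proof -
  let ?Q = "q ^ L" and ?b = "\<lambda>r. b + int r * a" and ?c = "a * int (uq_below (q ^ L)) + c"
  have Q_pos: "?Q > 0" using radix_ge_2 by simp
  then have "strict_mono (\<lambda>N. ?Q * N)" by (simp add: strict_mono_def)
  from LIMSEQ_subseq_LIMSEQ[OF expsum_average_tendsto this]
  have "(\<lambda>N. expsum a b c (?Q * N) / of_nat (?Q * N)) \<longlonglongrightarrow> char_mean a b c"
    by (simp add: o_def)
  moreover have "expsum a b c (?Q * N) / of_nat (?Q * N)
      = (\<Sum>r<?Q. add_char d (phase a b c r) * (expsum a (?b r) ?c N / of_nat N)) / of_nat ?Q" for N
    unfolding expsum_block[OF assms] of_nat_mult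
    by (simp add: sum_divide_distrib[symmetric] divide_divide_eq_left mult.commute)
  moreover have "(\<lambda>N. (\<Sum>r<?Q. add_char d (phase a b c r) * (expsum a (?b r) ?c N / of_nat N)) / of_nat ?Q)
      \<longlonglongrightarrow> (\<Sum>r<?Q. add_char d (phase a b c r) * char_mean a (?b r) ?c) / of_nat ?Q"
    using Q_pos by (intro tendsto_intros expsum_average_tendsto) simp
  ultimately show ?thesis using LIMSEQ_unique by auto
qed

lemma exists_max_char_mean:
  obtains a0 b0 c0 where "\<not> int d dvd a0"
    "\<And>a b c. \<not> int d dvd a \<Longrightarrow> norm (char_mean a b c) \<le> norm (char_mean a0 b0 c0)"
proof -
  define S where "S = {1..<int d} \<times> {0..<int d} \<times> {0..<int d}"
  define F where "F = (\<lambda>(a, b, c). norm (char_mean a b c))"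
  have "finite (F ` S)" "F ` S \<noteq> {}"
    using modulus_ge_2 by (auto simp: S_def)
  then obtain a0 b0 c0 where s0: "(a0, b0, c0) \<in> S" "F (a0, b0, c0) = Max (F ` S)"
    using Max_in by (metis (no_types, lifting) imageE prod_cases3)
  show ?thesis
  proof
    show "\<not> int d dvd a0" using s0(1) by (auto simp: S_def zdvd_not_zless)
    fix a b c assume "\<not> int d dvd a"
    then have "a mod int d \<noteq> 0" by (simp add: dvd_eq_mod_eq_0)
    then have "1 \<le> a mod int d" using pos_mod_sign[of "int d" a] modulus_pos by linarith
    then have "(a mod int d, b mod int d, c mod int d) \<in> S"
      using modulus_pos by (simp add: S_def)
    then have "F (a mod int d, b mod int d, c mod int d) \<le> F (a0, b0, c0)"
      unfolding s0(2) using \<open>finite (F ` S)\<close> by simp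
    moreover have "char_mean a b c = char_mean (a mod int d) (b mod int d) (c mod int d)"
      by (rule char_mean_cong) simp_all
    ultimately show "norm (char_mean a b c) \<le> norm (char_mean a0 b0 c0)"
      by (simp add: F_def)
  qed
qed

lemma phase_periodic_if_char_mean_maximal:
  assumes "\<not> int d dvd a" "char_mean a b c \<noteq> 0"
    and maximal: "\<And>a' b' c'. \<not> int d dvd a' \<Longrightarrow> norm (char_mean a' b' c') \<le> norm (char_mean a b c)"
  shows "[phase a b c (r + d) = phase a b c r] (mod int d)"
proof -
  define M where "M = norm (char_mean a b c)"
  have M_pos: "M > 0" using assms(2) by (simp add: M_def)
  obtain L where L: "r + d < q ^ L" "int d dvd int (wq q (q ^ L))" "[int (q ^ L) = 1] (mod int d)"
    by (rule exists_good_block_length)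
  define Q c' where "Q = q ^ L" and "c' = a * int (uq_below Q) + c"
  define e where "e r' = add_char d (phase a b c r')" for r'
  define z where "z r' = e r' * char_mean a (b + int r' * a) c'" for r'
  have bound: "norm (z r') \<le> M" for r'
    using maximal[OF assms(1)] by (simp add: z_def e_def M_def norm_mult)
  have "char_mean a b c = (\<Sum>r'<Q. z r') / of_nat Q"
    unfolding z_def e_def Q_def c'_def by (rule char_mean_block[OF L(2,3)])
  moreover have "Q > 0" using radix_ge_2 by (simp add: Q_def)
  ultimately have "real (card {..<Q}) * M \<le> norm (\<Sum>r'<Q. z r')"
    by (simp add: M_def norm_divide)
  then have "2 * M \<le> norm (z r + z (r + d))"
    using L(1) modulus_pos bound
    by (intro norm_pair_ge_if_norm_sum_maximal[where A = "{..<Q}" and z = z]) (simp_all add: Q_def)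
  moreover have "norm (z r + z (r + d)) \<le> norm (e r + e (r + d)) * M"
  proof -
    have "char_mean a (b + int (r + d) * a) c' = char_mean a (b + int r * a) c'"
      by (rule char_mean_cong) (simp_all add: cong_iff_dvd_diff algebra_simps)
    then have "norm (z r + z (r + d)) = norm (e r + e (r + d)) * norm (char_mean a (b + int r * a) c')"
      by (simp add: z_def norm_mult flip: distrib_right)
    also have "\<dots> \<le> norm (e r + e (r + d)) * M"
      using maximal[OF assms(1)] by (intro mult_left_mono) (simp_all add: M_def)
    finally show ?thesis .
  qed
  ultimately have "2 * M \<le> norm (e r + e (r + d)) * M"
    by linarith
  then have "2 \<le> norm (e r + e (r + d))"
    using M_pos by simp
  then have "e r = e (r + d)"
    by (intro unit_eq_if_norm_add_ge_2) (simp_all add: e_def)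
  then show ?thesis
    using add_char_eq_iff[OF modulus_pos] cong_sym unfolding e_def by blast
qed

lemma char_mean_eq_0:
  assumes "\<not> int d dvd a"
  shows "char_mean a b c = 0"
proof -
  obtain a0 b0 c0 where a0: "\<not> int d dvd a0"
    and maximal: "\<And>a b c. \<not> int d dvd a \<Longrightarrow> norm (char_mean a b c) \<le> norm (char_mean a0 b0 c0)"
    using exists_max_char_mean by blast
  have "char_mean a0 b0 c0 = 0"
  proof (rule ccontr)
    assume "char_mean a0 b0 c0 \<noteq> 0"
    then have "\<forall>r. [phase a0 b0 c0 (r + d) = phase a0 b0 c0 r] (mod int d)"
      using a0 maximal phase_periodic_if_char_mean_maximal by blast
    then have "[a0 = 0] (mod int d)"
      using radix_not_dvd_modulus periodic_phase_imp_cong_0 by blast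
    with a0 show False by (simp add: cong_0_iff)
  qed
  then show ?thesis using maximal[OF assms] by simp
qed

lemma sum_char_mean_multiples:
  assumes "coprime tu (int d)"
  shows "(\<Sum>k<d. add_char d (int k * x) * char_mean (int k * tu) (int k * tw) 0) = 1"
proof -
  have "char_mean (int k * tu) (int k * tw) 0 = 0" if "k \<in> {..<d} - {0}" for k
  proof (rule char_mean_eq_0)
    have "\<not> int d dvd int k" using that by (auto dest: zdvd_imp_le)
    then show "\<not> int d dvd int k * tu"
      using assms by (simp add: coprime_commute coprime_dvd_mult_left_iff)
  qed
  then have "(\<Sum>k<d. add_char d (int k * x) * char_mean (int k * tu) (int k * tw) 0)
      = add_char d 0 * char_mean 0 0 0"
    using modulus_pos by (simp add: sum.remove[of "{..<d}" 0])
  then show ?thesis by (simp add: char_mean_0)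
qed

lemma gamma_ratio_tendsto:
  assumes "coprime tu (int d)"
  shows "gamma_ratio q d (tu, tw, 0, 0, x) \<longlonglongrightarrow> 1 / real d"
proof -
  have "(\<lambda>N. of_real (gamma_ratio q d (tu, tw, 0, 0, x) N))
      \<longlonglongrightarrow> (\<Sum>k<d. add_char d (int k * x) * char_mean (int k * tu) (int k * tw) 0) / (of_nat d :: complex)"
    unfolding gamma_ratio_eq_expsum_average using modulus_pos
    by (intro tendsto_intros expsum_average_tendsto) simp
  then have "(\<lambda>N. of_real (gamma_ratio q d (tu, tw, 0, 0, x) N)) \<longlonglongrightarrow> (of_real (1 / real d) :: complex)"
    by (simp add: sum_char_mean_multiples[OF assms])
  then show ?thesis by (simp only: tendsto_of_real_iff)
qed

lemma uq_residue_density: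
  "(\<lambda>N. real (card {n. n < N \<and> int (uq q n) mod int d = r mod int d}) / real N) \<longlonglongrightarrow> 1 / real d"
proof -
  have "{n. n < N \<and> int (uq q n) mod int d = r mod int d}
      = {n. n < N \<and> (1 * int (uq q n) + 0 * int (wq q n) + 0 * int (n * (n + 1) div 2) + 0 * int n + - r) mod int d = 0}" for N
    by (auto simp: mod_eq_dvd_iff mod_eq_0_iff_dvd)
  then have "(\<lambda>N. real (card {n. n < N \<and> int (uq q n) mod int d = r mod int d}) / real N)
      = gamma_ratio q d (1, 0, 0, 0, - r)"
    by (intro ext) (simp only: gamma_ratio_def gamma_count_def prod.case)
  then show ?thesis using gamma_ratio_tendsto[of 1 0 "- r"] by simp
qed

end

theorem theorem4p4:
  fixes q d :: nat
  assumes "q \<ge> 2" and "d \<ge> 2" and "coprime q d"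
    and "\<forall>s :: param. convergent (gamma_ratio q d s)"
  shows "(\<forall>tu tw x :: int. coprime tu (int d) \<longrightarrow>
            gamma_ratio q d (tu, tw, 0, 0, x) \<longlonglongrightarrow> 1 / real d)
       \<and> (\<forall>r :: int. (\<lambda>N. real (card {n. n < N \<and> int (uq q n) mod int d = r mod int d}) / real N)
            \<longlonglongrightarrow> 1 / real d)"
proof -
  interpret convergent_densities q d
    using assms by unfold_locales auto
  show ?thesis using gamma_ratio_tendsto uq_residue_density by blast
qed

end
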